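(* If a planar matching covered graph is cycle-extendable, then it is $K_{2,3}$-free.
   Context: A graph is matching covered if it is connected, has at least two vertices, and every edge lies in some perfect matching; it is cycle-extendable if moreover for every even cycle $C$ the graph $G-V(C)$ has a perfect matching. To bisubdivide an edge is to subdivide it by inserting an even number of new vertices; a bisubdivision of $K$ is obtained by bisubdividing some (possibly none) of its edges. A graph is $K_{2,3}$-free if it has no subgraph that is a bisubdivision of $K_{2,3}$. *)

theory Defs
  imports "HOL-Analysis.Analysis"
begin

definition graph :: "'a set \<Rightarrow> 'a set set \<Rightarrow> bool" where
  "graph V E \<longleftrightarrow> finite V \<and> (\<forall>e\<in>E. \<exists>u v. e = {u, v} \<and> u \<noteq> v \<and> u \<in> V \<and> v \<in> V)"

definition adj :: "'a set set \<Rightarrow> 'a \<Rightarrow> 'a \<Rightarrow> bool" where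
  "adj E u v \<longleftrightarrow> {u, v} \<in> E"

definition connected_graph :: "'a set \<Rightarrow> 'a set set \<Rightarrow> bool" where
  "connected_graph V E \<longleftrightarrow> (\<forall>u\<in>V. \<forall>v\<in>V. (adj E)\<^sup>*\<^sup>* u v)"

definition perfect_matching :: "'a set \<Rightarrow> 'a set set \<Rightarrow> 'a set set \<Rightarrow> bool" where
  "perfect_matching V E M \<longleftrightarrow> M \<subseteq> E \<and> (\<forall>v\<in>V. \<exists>!e. e \<in> M \<and> v \<in> e)"

definition has_perfect_matching :: "'a set \<Rightarrow> 'a set set \<Rightarrow> bool" where
  "has_perfect_matching V E \<longleftrightarrow> (\<exists>M. perfect_matching V E M)"

definition matching_covered :: "'a set \<Rightarrow> 'a set set \<Rightarrow> bool" where
  "matching_covered V E \<longleftrightarrow> graph V E \<and> connected_graph V E \<and> card V \<ge> 2 \<and>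
     (\<forall>e\<in>E. \<exists>M. perfect_matching V E M \<and> e \<in> M)"

definition is_cycle :: "'a set set \<Rightarrow> 'a list \<Rightarrow> bool" where
  "is_cycle E vs \<longleftrightarrow> length vs \<ge> 3 \<and> distinct vs \<and>
     (\<forall>i < length vs - 1. adj E (vs ! i) (vs ! Suc i)) \<and> adj E (last vs) (hd vs)"

definition del_verts_E :: "'a set set \<Rightarrow> 'a set \<Rightarrow> 'a set set" where
  "del_verts_E E S = {e \<in> E. e \<inter> S = {}}"

definition cycle_extendable :: "'a set \<Rightarrow> 'a set set \<Rightarrow> bool" where
  "cycle_extendable V E \<longleftrightarrow> matching_covered V E \<and>
     (\<forall>vs. is_cycle E vs \<and> even (length vs) \<longrightarrow>
        has_perfect_matching (V - set vs) (del_verts_E E (set vs)))"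

definition is_path :: "'a set set \<Rightarrow> 'a \<Rightarrow> 'a list \<Rightarrow> 'a \<Rightarrow> bool" where
  "is_path E a p b \<longleftrightarrow> p \<noteq> [] \<and> hd p = a \<and> last p = b \<and> distinct p \<and>
     (\<forall>i < length p - 1. adj E (p ! i) (p ! Suc i))"

definition inner_verts :: "'a list \<Rightarrow> 'a set" where
  "inner_verts p = set (butlast (tl p))"

text \<open>G contains a subgraph that is a bisubdivision of K_{2,3}: branch vertices
  a 0, a 1 (one side) and b 0, b 1, b 2 (other side), all distinct; for each pair
  (i,j) a path P i j from a i to b j of odd length (number of edges), so that the edge
  a_i b_j is subdivided by an even number of new vertices; the paths are internally
  disjoint from each other and from the branch vertices.\<close>
definition has_K23_bisubdivision :: "'a set set \<Rightarrow> bool" where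
  "has_K23_bisubdivision E \<longleftrightarrow>
     (\<exists>(a :: nat \<Rightarrow> 'a) (b :: nat \<Rightarrow> 'a) (P :: nat \<Rightarrow> nat \<Rightarrow> 'a list).
        inj_on a {0..<2} \<and> inj_on b {0..<3} \<and> a ` {0..<2} \<inter> b ` {0..<3} = {} \<and>
        (\<forall>i<2. \<forall>j<3. is_path E (a i) (P i j) (b j) \<and> odd (length (P i j) - 1) \<and>
                     inner_verts (P i j) \<inter> (a ` {0..<2} \<union> b ` {0..<3}) = {}) \<and>
        (\<forall>i<2. \<forall>j<3. \<forall>i'<2. \<forall>j'<3. (i, j) \<noteq> (i', j') \<longrightarrow>
                     inner_verts (P i j) \<inter> inner_verts (P i' j') = {}))"

definition K23_free :: "'a set set \<Rightarrow> bool" where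
  "K23_free E \<longleftrightarrow> \<not> has_K23_bisubdivision E"

definition planar :: "'a set \<Rightarrow> 'a set set \<Rightarrow> bool" where
  "planar V E \<longleftrightarrow> (\<exists>(pos :: 'a \<Rightarrow> real^2) (\<gamma> :: 'a set \<Rightarrow> real \<Rightarrow> real^2).
     inj_on pos V \<and>
     (\<forall>e\<in>E. arc (\<gamma> e) \<and> {pathstart (\<gamma> e), pathfinish (\<gamma> e)} = pos ` e \<and>
             path_image (\<gamma> e) \<inter> pos ` V = pos ` e) \<and>
     (\<forall>e\<in>E. \<forall>e'\<in>E. e \<noteq> e' \<longrightarrow> path_image (\<gamma> e) \<inter> path_image (\<gamma> e') \<subseteq> pos ` (e \<inter> e')))"

end

theory Submission
  imports Defs
begin

text \<open>A bisubdivision of K_{2,3} with branch vertices a_0, a_1 on one side gives three internally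
  disjoint a_0-a_1 paths, each with an even number of edges, so any two of them form an even cycle.
  In a plane drawing one of the three paths, Q, runs inside the cycle C formed by the other two,
  and cuts the inside of C into the insides of the two cycles through Q. For each of these three
  cycles, cycle-extendability gives a perfect matching of the graph minus the cycle, whose edges
  cannot cross the cycle; hence each inside contains an even number of vertices. But the inner
  vertices of Q are odd in number, which breaks the count.\<close>

section \<open>Walks, paths and cycles\<close>

fun walk :: "'a set set \<Rightarrow> 'a list \<Rightarrow> bool" where
  "walk E (u # v # rest) \<longleftrightarrow> adj E u v \<and> walk E (v # rest)"
| "walk E _ \<longleftrightarrow> True"

fun walk_edges :: "'a list \<Rightarrow> 'a set set" where
  "walk_edges (u # v # rest) = insert {u, v} (walk_edges (v # rest))"
| "walk_edges _ = {}"

lemma adj_sym: "adj E u v \<Longrightarrow> adj E v u"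
  unfolding adj_def by (simp add: insert_commute)

lemma walk_iff_adj_nth: "walk E p \<longleftrightarrow> (\<forall>i < length p - 1. adj E (p ! i) (p ! Suc i))"
  by (induction E p rule: walk.induct) (auto simp: less_Suc_eq_0_disj)

lemma is_path_iff_walk:
  "is_path E a p b \<longleftrightarrow> p \<noteq> [] \<and> hd p = a \<and> last p = b \<and> distinct p \<and> walk E p"
  unfolding is_path_def walk_iff_adj_nth by blast

lemma walk_Cons: "walk E (x # xs) \<longleftrightarrow> walk E xs \<and> (xs \<noteq> [] \<longrightarrow> adj E x (hd xs))"
  by (cases xs) auto

lemma walk_append:
  "walk E (xs @ ys) \<longleftrightarrow>
     walk E xs \<and> walk E ys \<and> (xs \<noteq> [] \<and> ys \<noteq> [] \<longrightarrow> adj E (last xs) (hd ys))"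
  by (induction xs rule: induct_list012) (auto simp: walk_Cons)

lemma walk_rev: "walk E xs \<Longrightarrow> walk E (rev xs)"
  by (induction xs) (auto simp: walk_append walk_Cons last_rev adj_sym)

lemma walk_append_tl:
  assumes "walk E xs" "walk E ys" "xs \<noteq> []" "last xs = hd ys"
  shows "walk E (xs @ tl ys)"
  using assms by (cases ys) (auto simp: walk_append walk_Cons)

lemma walk_edges_subset: "walk E p \<Longrightarrow> walk_edges p \<subseteq> E"
  by (induction E p rule: walk.induct) (auto simp: adj_def)

lemma walk_edges_subset_set: "e \<in> walk_edges p \<Longrightarrow> e \<subseteq> set p"
  by (induction p rule: walk_edges.induct) auto

lemma Union_walk_edges: "length p \<ge> 2 \<Longrightarrow> \<Union>(walk_edges p) = set p"
proof (induction p rule: walk_edges.induct)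
  case (1 u v rest)
  then show ?case by (cases rest) auto
qed auto

lemma walk_edge_hd_last:
  assumes "distinct p" "e \<in> walk_edges p" "hd p \<in> e" "last p \<in> e" "length p \<ge> 2"
  shows "length p = 2"
  using assms
proof (induction p rule: walk_edges.induct)
  case (1 u v rest)
  show ?case
  proof (cases "e = {u, v}")
    case True
    then show ?thesis using 1 by (cases rest rule: rev_cases) auto
  next
    case False
    then have "e \<in> walk_edges (v # rest)" using 1 by auto
    then have "e \<subseteq> set (v # rest)" by (rule walk_edges_subset_set)
    then show ?thesis using 1 by auto
  qed
qed auto

lemma set_butlast_tl:
  assumes "distinct xs" "length xs \<ge> 2"
  shows "set (butlast (tl xs)) = set xs - {hd xs, last xs}"
proof -
  obtain x ys y where "xs = x # ys @ [y]"
    using assms(2) by (metis One_nat_def Suc_1 Suc_le_length_iff list.size(3)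
        not_one_le_zero rev_exhaust)
  then show ?thesis using assms by auto
qed

lemma is_cycleI:
  assumes "length vs \<ge> 3" "distinct vs" "walk E (vs @ [hd vs])"
  shows "is_cycle E vs"
  using assms unfolding is_cycle_def walk_iff_adj_nth[symmetric]
  by (auto simp: walk_append)

lemma is_path_length_ge2: "is_path E a p b \<Longrightarrow> a \<noteq> b \<Longrightarrow> length p \<ge> 2"
  unfolding is_path_iff_walk by (cases p) (auto simp: Suc_le_eq split: if_splits)

lemma set_is_path:
  assumes "is_path E a p b" "a \<noteq> b"
  shows "set p = {a, b} \<union> inner_verts p"
proof -
  have p: "p \<noteq> []" "hd p = a" "last p = b" "distinct p"
    using assms(1) unfolding is_path_iff_walk by simp_all
  then have "a \<in> set p" "b \<in> set p" by auto
  moreover have "inner_verts p = set p - {a, b}"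
    using set_butlast_tl[OF p(4) is_path_length_ge2[OF assms]] p(2,3) unfolding inner_verts_def
    by simp
  ultimately show ?thesis by blast
qed

lemma is_path_join:
  assumes p: "is_path E a p b" and q: "is_path E c q b" and pq: "set p \<inter> set q = {b}"
  shows "is_path E a (p @ tl (rev q)) c"
    and "set (p @ tl (rev q)) = set p \<union> set q"
    and "length (p @ tl (rev q)) = length p + length q - 1"
proof -
  have "rev q \<noteq> []" "hd (rev q) = b" using q unfolding is_path_iff_walk by (simp_all add: hd_rev)
  then obtain r where r: "rev q = b # r" by (cases "rev q") auto
  have r': "set (b # r) = set q" "length (b # r) = length q"
    unfolding r[symmetric] by simp_all
  have p': "p \<noteq> []" "hd p = a" "last p = b" "distinct p" "walk E p"
    using p unfolding is_path_iff_walk by simp_all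
  have q': "last (b # r) = c" "distinct (b # r)" "walk E (b # r)"
    using q walk_rev[of E q] unfolding is_path_iff_walk r[symmetric] by (simp_all add: last_rev)
  have "walk E (p @ r)" using walk_append_tl[OF p'(5) q'(3) p'(1)] p'(3) by simp
  moreover have "distinct (p @ r)" using p'(4) q'(2) pq r'(1) by auto
  moreover have "last (p @ r) = c" using p'(3) q'(1) by (cases r) auto
  ultimately show "is_path E a (p @ tl (rev q)) c"
    unfolding is_path_iff_walk r using p'(1,2) by simp
  show "set (p @ tl (rev q)) = set p \<union> set q"
    using pq r r'(1) by auto
  show "length (p @ tl (rev q)) = length p + length q - 1"
    using r r'(2) by simp
qed

lemma is_cycle_join_paths:
  assumes p: "is_path E x p y" and q: "is_path E x q y" and pq: "set p \<inter> set q = {x, y}"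
    and xy: "x \<noteq> y" and len: "length p \<ge> 3"
  shows "is_cycle E (p @ butlast (tl (rev q)))"
    and "set (p @ butlast (tl (rev q))) = set p \<union> set q"
    and "length (p @ butlast (tl (rev q))) = length p + length q - 2"
proof -
  define r where "r = butlast (tl (rev q))"
  have q2: "length q \<ge> 2" using is_path_length_ge2[OF q xy] .
  have q': "rev q \<noteq> []" "hd (rev q) = y" "last (rev q) = x" "distinct (rev q)" "walk E (rev q)"
    using q walk_rev[of E q] unfolding is_path_iff_walk by (auto simp: hd_rev last_rev)
  obtain t where t: "rev q = y # t" using q'(1,2) by (cases "rev q") auto
  have "t \<noteq> []" using q2 arg_cong[OF t, of length] by auto
  moreover have "last t = x" using q'(3) t calculation by simp
  ultimately have tl: "tl (rev q) = r @ [x]" unfolding r_def t by (simp, metis append_butlast_last_id)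
  have set_r: "set r = set q - {x, y}"
    using set_butlast_tl[of "rev q"] q' q2 unfolding r_def by auto
  have p': "p \<noteq> []" "hd p = x" "last p = y" "distinct p" "walk E p"
    using p unfolding is_path_iff_walk by simp_all
  have "distinct r" using q'(4) distinct_tl[of "rev q"] unfolding tl by simp
  then have "distinct (p @ r)" using p'(4) set_r pq by auto
  moreover have "walk E (p @ r @ [x])"
    using walk_append_tl[OF p'(5) q'(5) p'(1)] p'(3) q'(2) tl by simp
  moreover have "length (p @ r) \<ge> 3" using len by simp
  ultimately show "is_cycle E (p @ butlast (tl (rev q)))"
    using p'(1,2) is_cycleI[of "p @ r" E] unfolding r_def[symmetric] by simp
  show "set (p @ butlast (tl (rev q))) = set p \<union> set q"
    using set_r pq unfolding r_def[symmetric] by auto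
  show "length (p @ butlast (tl (rev q))) = length p + length q - 2"
    using q2 by simp
qed

section \<open>Bisubdivisions of K_{2,3}\<close>

locale K23_bisubdivision =
  fixes E :: "'a set set" and a b :: "nat \<Rightarrow> 'a" and P :: "nat \<Rightarrow> nat \<Rightarrow> 'a list"
  assumes inj_a: "inj_on a {0..<2}" and inj_b: "inj_on b {0..<3}"
    and branches_disjoint: "a ` {0..<2} \<inter> b ` {0..<3} = {}"
    and P_path: "i < 2 \<Longrightarrow> j < 3 \<Longrightarrow> is_path E (a i) (P i j) (b j)"
    and P_odd: "i < 2 \<Longrightarrow> j < 3 \<Longrightarrow> odd (length (P i j) - 1)"
    and inner_P_branches:
      "i < 2 \<Longrightarrow> j < 3 \<Longrightarrow> inner_verts (P i j) \<inter> (a ` {0..<2} \<union> b ` {0..<3}) = {}"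
    and inner_P_disjoint: "i < 2 \<Longrightarrow> j < 3 \<Longrightarrow> i' < 2 \<Longrightarrow> j' < 3 \<Longrightarrow> (i, j) \<noteq> (i', j') \<Longrightarrow>
      inner_verts (P i j) \<inter> inner_verts (P i' j') = {}"
begin

lemma a_distinct: "a 0 \<noteq> a 1"
  using inj_onD[OF inj_a, of 0 1] by auto

lemma b_distinct: "j < 3 \<Longrightarrow> k < 3 \<Longrightarrow> j \<noteq> k \<Longrightarrow> b j \<noteq> b k"
  using inj_onD[OF inj_b, of j k] by auto

lemma a_neq_b:
  assumes "i < 2" "j < 3"
  shows "a i \<noteq> b j"
proof -
  have "a i \<in> a ` {0..<2}" "b j \<in> b ` {0..<3}" using assms by auto
  then show ?thesis using branches_disjoint by (metis disjoint_iff)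
qed

lemma branch_notin_inner_P:
  assumes "i < 2" "j < 3" "i' < 2" "j' < 3"
  shows "a i' \<notin> inner_verts (P i j)" "b j' \<notin> inner_verts (P i j)"
proof -
  have "a i' \<in> a ` {0..<2}" "b j' \<in> b ` {0..<3}" using assms by auto
  then show "a i' \<notin> inner_verts (P i j)" "b j' \<notin> inner_verts (P i j)"
    using inner_P_branches[OF assms(1,2)] by blast+
qed

lemma set_P: "i < 2 \<Longrightarrow> j < 3 \<Longrightarrow> set (P i j) = {a i, b j} \<union> inner_verts (P i j)"
  using set_is_path[OF P_path a_neq_b] .

lemma length_P:
  assumes "i < 2" "j < 3"
  shows "length (P i j) \<ge> 2" "even (length (P i j))"
proof -
  show "length (P i j) \<ge> 2" using is_path_length_ge2[OF P_path a_neq_b, OF assms assms] .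
  then show "even (length (P i j))" using P_odd[OF assms] by presburger
qed

definition theta_path :: "nat \<Rightarrow> 'a list" where
  "theta_path j = P 0 j @ tl (rev (P 1 j))"

lemma theta_path:
  assumes j: "j < 3"
  shows "is_path E (a 0) (theta_path j) (a 1)"
    and "set (theta_path j) = {a 0, a 1, b j} \<union> inner_verts (P 0 j) \<union> inner_verts (P 1 j)"
    and "odd (length (theta_path j))"
proof -
  have set_Pj: "set (P 0 j) = {a 0, b j} \<union> inner_verts (P 0 j)"
    "set (P 1 j) = {a 1, b j} \<union> inner_verts (P 1 j)"
    using set_P j by simp_all
  have "set (P 0 j) \<inter> set (P 1 j) = {b j}"
    unfolding set_Pj
    using branch_notin_inner_P[of 0 j 1 j] branch_notin_inner_P[of 1 j 0 j]
      inner_P_disjoint[of 0 j 1 j] a_distinct a_neq_b[of 0 j] a_neq_b[of 1 j] j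
    by auto
  moreover have "is_path E (a 0) (P 0 j) (b j)" "is_path E (a 1) (P 1 j) (b j)"
    using P_path j by simp_all
  ultimately have join: "is_path E (a 0) (theta_path j) (a 1)"
    "set (theta_path j) = set (P 0 j) \<union> set (P 1 j)"
    "length (theta_path j) = length (P 0 j) + length (P 1 j) - 1"
    using is_path_join[of E "a 0" "P 0 j" "b j" "a 1" "P 1 j"] unfolding theta_path_def by simp_all
  show "is_path E (a 0) (theta_path j) (a 1)" by (fact join(1))
  show "set (theta_path j) = {a 0, a 1, b j} \<union> inner_verts (P 0 j) \<union> inner_verts (P 1 j)"
    using join(2) unfolding set_Pj by auto
  have "length (P 0 j) \<ge> 2" "even (length (P 0 j))" "even (length (P 1 j))"
    using length_P j by simp_all
  then show "odd (length (theta_path j))" unfolding join(3) by presburger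
qed

lemma set_theta_path_Int:
  assumes jk: "j < 3" "k < 3" "j \<noteq> k"
  shows "set (theta_path j) \<inter> set (theta_path k) = {a 0, a 1}"
  unfolding theta_path(2)[OF jk(1)] theta_path(2)[OF jk(2)]
  using b_distinct[OF jk] a_neq_b[of 0 j] a_neq_b[of 1 j] a_neq_b[of 0 k] a_neq_b[of 1 k] jk
    branch_notin_inner_P[of 0 j 0 k] branch_notin_inner_P[of 1 j 0 k]
    branch_notin_inner_P[of 0 k 0 j] branch_notin_inner_P[of 1 k 0 j]
    branch_notin_inner_P[of 0 j 1 k] branch_notin_inner_P[of 1 j 1 k]
    branch_notin_inner_P[of 0 k 1 j] branch_notin_inner_P[of 1 k 1 j]
    inner_P_disjoint[of 0 j 0 k] inner_P_disjoint[of 0 j 1 k]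
    inner_P_disjoint[of 1 j 0 k] inner_P_disjoint[of 1 j 1 k]
  by auto

end

lemma K23_bisubdivision_odd_theta:
  fixes E :: "'a set set"
  assumes "has_K23_bisubdivision E"
  obtains x y :: 'a and Q :: "nat \<Rightarrow> 'a list" where "x \<noteq> y"
    and "\<And>j. j < 3 \<Longrightarrow> is_path E x (Q j) y \<and> odd (length (Q j))"
    and "\<And>j k. j < 3 \<Longrightarrow> k < 3 \<Longrightarrow> j \<noteq> k \<Longrightarrow> set (Q j) \<inter> set (Q k) = {x, y}"
proof -
  obtain a b :: "nat \<Rightarrow> 'a" and P :: "nat \<Rightarrow> nat \<Rightarrow> 'a list"
    where "inj_on a {0..<2}" "inj_on b {0..<3}" "a ` {0..<2} \<inter> b ` {0..<3} = {}"
      "\<forall>i<2. \<forall>j<3. is_path E (a i) (P i j) (b j) \<and> odd (length (P i j) - 1) \<and>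
         inner_verts (P i j) \<inter> (a ` {0..<2} \<union> b ` {0..<3}) = {}"
      "\<forall>i<2. \<forall>j<3. \<forall>i'<2. \<forall>j'<3. (i, j) \<noteq> (i', j') \<longrightarrow>
         inner_verts (P i j) \<inter> inner_verts (P i' j') = {}"
    using assms unfolding has_K23_bisubdivision_def by (elim exE conjE) (rule that; assumption)
  then interpret K23_bisubdivision E a b P by unfold_locales simp_all
  show ?thesis
  proof (rule that)
    show "a 0 \<noteq> a 1" by (fact a_distinct)
    show "is_path E (a 0) (theta_path j) (a 1) \<and> odd (length (theta_path j))" if "j < 3" for j
      using theta_path[OF that] by blast
    show "set (theta_path j) \<inter> set (theta_path k) = {a 0, a 1}"
      if "j < 3" "k < 3" "j \<noteq> k" for j k
      using set_theta_path_Int[OF that] .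
  qed
qed

section \<open>Theta graphs of arcs in the plane\<close>

lemma connected_subset_outside:
  fixes S K :: "'a::real_normed_vector set"
  assumes "connected S" "S \<inter> K = {}" "closed K" "closure S \<inter> outside K \<noteq> {}"
  shows "S \<subseteq> outside K"
proof
  fix u assume "u \<in> S"
  have "S \<inter> outside K \<noteq> {}"
    using assms(4) open_Int_closure_eq_empty[OF open_outside[OF assms(3)]] by blast
  then obtain w where w: "w \<in> S" "w \<in> outside K" by blast
  have "connected_component (- K) w u"
    unfolding connected_component_def using assms(1,2) w(1) \<open>u \<in> S\<close> by blast
  then show "u \<in> outside K" using outside_same_component w(2) by blast
qed

lemma Jordan_double_arc:
  fixes c1 c2 :: "real \<Rightarrow> complex"
  assumes "arc c1" "arc c2" "pathstart c1 = a" "pathfinish c1 = b"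
    "pathstart c2 = a" "pathfinish c2 = b" "path_image c1 \<inter> path_image c2 = {a, b}"
  shows "inside (path_image c1 \<union> path_image c2) \<noteq> {}"
    and "connected (inside (path_image c1 \<union> path_image c2))"
    and "frontier (inside (path_image c1 \<union> path_image c2)) = path_image c1 \<union> path_image c2"
proof -
  have "simple_path (c1 +++ reversepath c2)"
    using assms by (auto simp: simple_path_join_loop_eq arc_simple_path simple_path_reversepath)
  moreover have "path_image (c1 +++ reversepath c2) = path_image c1 \<union> path_image c2"
    using assms by (simp add: path_image_join path_image_reversepath)
  ultimately show "inside (path_image c1 \<union> path_image c2) \<noteq> {}"
    and "connected (inside (path_image c1 \<union> path_image c2))"
    and "frontier (inside (path_image c1 \<union> path_image c2)) = path_image c1 \<union> path_image c2"
    using Jordan_inside_outside[of "c1 +++ reversepath c2"] assms by simp_all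
qed

lemma outside_Un:
  fixes S T :: "complex set"
  assumes "compact S" "compact T" "connected (S \<inter> T)" "x \<in> outside S" "x \<in> outside T"
  shows "x \<in> outside (S \<union> T)"
proof -
  obtain z where z: "z \<in> outside (S \<union> T)"
    using unbounded_outside[of "S \<union> T"] assms(1,2)
    by (metis bounded_Un bounded_empty compact_imp_bounded ex_in_conv)
  have "connected_component (- K) x z" if "K = S \<or> K = T" for K
  proof -
    have "z \<in> outside K" using z that outside_mono[of K "S \<union> T"] by blast
    moreover have "connected (outside K)"
      using that assms(1,2) by (auto intro: connected_outside compact_imp_bounded)
    ultimately show ?thesis
      unfolding connected_component_def using that assms(4,5) outside_no_overlap[of K] by blast
  qed
  then have "connected_component (- (S \<union> T)) x z"
    using Janiszewski[OF assms(1) compact_imp_closed[OF assms(2)] assms(3)] by blast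
  then show ?thesis using z outside_same_component connected_component_sym by blast
qed

text \<open>If no arc met the inside of the cycle formed by the other two, a point inside the cycle
  c1 c2 would lie outside the other two cycles and hence, by Janiszewski's theorem (they meet in
  the connected arc c3), outside their union, which contains c1 and c2.\<close>
lemma theta_arc_meets_inside:
  fixes c1 c2 c3 :: "real \<Rightarrow> complex"
  assumes arcs: "arc c1" "arc c2" "arc c3"
    and starts: "pathstart c1 = a" "pathstart c2 = a" "pathstart c3 = a"
    and finishes: "pathfinish c1 = b" "pathfinish c2 = b" "pathfinish c3 = b"
    and i12: "path_image c1 \<inter> path_image c2 = {a, b}"
    and i13: "path_image c1 \<inter> path_image c3 = {a, b}"
    and i23: "path_image c2 \<inter> path_image c3 = {a, b}"
  shows "path_image c3 \<inter> inside (path_image c1 \<union> path_image c2) \<noteq> {} \<or>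
         path_image c1 \<inter> inside (path_image c2 \<union> path_image c3) \<noteq> {} \<or>
         path_image c2 \<inter> inside (path_image c1 \<union> path_image c3) \<noteq> {}"
proof (rule ccontr)
  define K12 where "K12 = path_image c1 \<union> path_image c2"
  define K13 where "K13 = path_image c1 \<union> path_image c3"
  define K23 where "K23 = path_image c2 \<union> path_image c3"
  assume "\<not> ?thesis"
  then have n3: "inside K12 \<inter> K13 = {}" "inside K12 \<inter> K23 = {}"
    and n1: "path_image c1 \<inter> inside K23 = {}"
    and n2: "path_image c2 \<inter> inside K13 = {}"
    using inside_no_overlap[of K12] unfolding K12_def K13_def K23_def by blast+
  note J12 = Jordan_double_arc[OF arcs(1,2) starts(1) finishes(1) starts(2) finishes(2) i12,
      folded K12_def]
  have compact: "compact K13" "compact K23"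
    unfolding K13_def K23_def by (simp_all add: compact_Un compact_path_image arcs arc_imp_path)
  have inside_outside: "inside K12 \<subseteq> outside K" if "compact K" "inside K12 \<inter> K = {}"
    and "p \<in> K12" "p \<notin> K" "p \<notin> inside K" for K p
  proof (rule connected_subset_outside[OF J12(2) that(2) compact_imp_closed[OF that(1)]])
    have "p \<in> closure (inside K12)" using J12(3) that(3) frontier_closures by blast
    moreover have "p \<in> outside K" using that(4,5) inside_Un_outside[of K] by blast
    ultimately show "closure (inside K12) \<inter> outside K \<noteq> {}" by blast
  qed
  obtain p1 where "p1 \<in> path_image c1" "p1 \<notin> {a, b}"
    using nonempty_simple_path_endless[OF arc_imp_simple_path[OF arcs(1)]] starts finishes by auto
  then have out23: "inside K12 \<subseteq> outside K23"
    using inside_outside[OF compact(2) n3(2)] n1 i12 i13 unfolding K12_def K23_def by blast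
  obtain p2 where "p2 \<in> path_image c2" "p2 \<notin> {a, b}"
    using nonempty_simple_path_endless[OF arc_imp_simple_path[OF arcs(2)]] starts finishes by auto
  then have out13: "inside K12 \<subseteq> outside K13"
    using inside_outside[OF compact(1) n3(1)] n2 i12 i23 unfolding K12_def K13_def by blast
  have "K13 \<inter> K23 = path_image c3"
    using i12 i13 i23 starts(3) finishes(3) pathstart_in_path_image pathfinish_in_path_image
    unfolding K23_def K13_def by blast
  then have "inside K12 \<subseteq> outside (K13 \<union> K23)"
    using outside_Un[OF compact] out13 out23 arcs(3)
    by (simp add: connected_path_image arc_imp_path subset_iff)
  also have "\<dots> \<subseteq> outside K12" by (rule outside_mono) (auto simp: K12_def K13_def K23_def)
  finally show False using J12(1) inside_Int_outside[of K12] by blast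
qed

section \<open>Plane graphs\<close>

lemma even_card_matching_closed:
  assumes M: "perfect_matching W F M" and two: "\<And>e. e \<in> F \<Longrightarrow> card e = 2"
    and I: "finite I" "I \<subseteq> W"
    and closed: "\<And>e v. e \<in> M \<Longrightarrow> v \<in> e \<Longrightarrow> v \<in> I \<Longrightarrow> e \<subseteq> I"
  shows "even (card I)"
proof -
  define C where "C = {e \<in> M. e \<subseteq> I}"
  have "I = \<Union>C"
  proof
    show "I \<subseteq> \<Union>C"
    proof
      fix v assume "v \<in> I"
      then obtain e where "e \<in> M" "v \<in> e" using M I(2) unfolding perfect_matching_def by blast
      then show "v \<in> \<Union>C" unfolding C_def using closed \<open>v \<in> I\<close> by blast
    qed
  qed (auto simp: C_def)
  moreover have disj: "pairwise disjnt C"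
    unfolding pairwise_def disjnt_def C_def using M I(2) unfolding perfect_matching_def by blast
  moreover have card2: "card e = 2" if "e \<in> C" for e
    using that two M unfolding C_def perfect_matching_def by blast
  ultimately have "card I = sum card C"
    by (metis card_Union_disjoint card.infinite zero_neq_numeral)
  also have "\<dots> = 2 * card C" using card2 by simp
  finally show ?thesis by simp
qed

locale plane_graph =
  fixes V :: "'a set" and E :: "'a set set" and pos :: "'a \<Rightarrow> complex"
    and \<gamma> :: "'a set \<Rightarrow> real \<Rightarrow> complex"
  assumes graph: "graph V E" and inj_pos: "inj_on pos V"
    and edge_arc: "\<And>e. e \<in> E \<Longrightarrow> arc (\<gamma> e) \<and> {pathstart (\<gamma> e), pathfinish (\<gamma> e)} = pos ` e \<and>
                      path_image (\<gamma> e) \<inter> pos ` V = pos ` e"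
    and edge_crossing: "\<And>e e'. e \<in> E \<Longrightarrow> e' \<in> E \<Longrightarrow> e \<noteq> e' \<Longrightarrow>
                   path_image (\<gamma> e) \<inter> path_image (\<gamma> e') \<subseteq> pos ` (e \<inter> e')"
begin

lemma finite_V: "finite V"
  using graph unfolding graph_def by simp

lemma edgeE:
  assumes "e \<in> E"
  obtains u v where "e = {u, v}" "u \<noteq> v" "u \<in> V" "v \<in> V"
  using graph assms unfolding graph_def by blast

lemma edge_subset_V: "e \<in> E \<Longrightarrow> e \<subseteq> V"
  by (metis edgeE empty_subsetI insert_subset)

lemma card_edge: "e \<in> E \<Longrightarrow> card e = 2"
  by (metis edgeE card_2_iff)

lemma adjD:
  assumes "adj E u v"
  shows "{u, v} \<in> E" "u \<noteq> v" "u \<in> V" "v \<in> V"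
proof -
  show e: "{u, v} \<in> E" using assms unfolding adj_def .
  then obtain x y where "{u, v} = {x, y}" "x \<noteq> y" "x \<in> V" "y \<in> V" by (rule edgeE)
  then show "u \<noteq> v" "u \<in> V" "v \<in> V" by (auto simp: doubleton_eq_iff)
qed

lemma set_walk_subset:
  assumes "walk E p" "length p \<ge> 2"
  shows "set p \<subseteq> V"
  using Union_walk_edges[OF assms(2)] walk_edges_subset[OF assms(1)] edge_subset_V by blast

definition edge_curve :: "'a \<Rightarrow> 'a \<Rightarrow> real \<Rightarrow> complex" where
  "edge_curve u v =
     (if pathstart (\<gamma> {u, v}) = pos u then \<gamma> {u, v} else reversepath (\<gamma> {u, v}))"

lemma edge_curve:
  assumes "adj E u v"
  shows "arc (edge_curve u v)" "pathstart (edge_curve u v) = pos u"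
    "pathfinish (edge_curve u v) = pos v" "path_image (edge_curve u v) = path_image (\<gamma> {u, v})"
proof -
  have "pos u \<noteq> pos v" using inj_on_contraD[OF inj_pos adjD(2-4)[OF assms]] .
  moreover have "arc (\<gamma> {u, v})" "{pathstart (\<gamma> {u, v}), pathfinish (\<gamma> {u, v})} = {pos u, pos v}"
    using edge_arc[OF adjD(1)[OF assms]] by auto
  ultimately show "arc (edge_curve u v)" "pathstart (edge_curve u v) = pos u"
    "pathfinish (edge_curve u v) = pos v" "path_image (edge_curve u v) = path_image (\<gamma> {u, v})"
    unfolding edge_curve_def using arc_distinct_ends[of "\<gamma> {u, v}"]
    by (auto simp: doubleton_eq_iff arc_reversepath path_image_reversepath)
qed

fun walk_curve :: "'a list \<Rightarrow> real \<Rightarrow> complex" where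
  "walk_curve (u # v # rest) =
     (if rest = [] then edge_curve u v else edge_curve u v +++ walk_curve (v # rest))"
| "walk_curve _ = \<gamma> {}"

definition walk_image :: "'a list \<Rightarrow> complex set" where
  "walk_image p = (\<Union>e\<in>walk_edges p. path_image (\<gamma> e))"

lemma walk_image_Int:
  assumes "walk E p" "walk E q" "walk_edges p \<inter> walk_edges q = {}"
  shows "walk_image p \<inter> walk_image q \<subseteq> pos ` (set p \<inter> set q)"
proof
  fix z assume "z \<in> walk_image p \<inter> walk_image q"
  then obtain e e' where e: "e \<in> walk_edges p" "e' \<in> walk_edges q"
    "z \<in> path_image (\<gamma> e)" "z \<in> path_image (\<gamma> e')"
    unfolding walk_image_def by auto
  have "e \<noteq> e'" using e assms(3) by blast
  then have "z \<in> pos ` (e \<inter> e')" using edge_crossing e walk_edges_subset assms by blast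
  then show "z \<in> pos ` (set p \<inter> set q)" using walk_edges_subset_set e by blast
qed

lemma walk_curve:
  assumes "walk E p" "distinct p" "length p \<ge> 2"
  shows "arc (walk_curve p) \<and> pathstart (walk_curve p) = pos (hd p) \<and>
    pathfinish (walk_curve p) = pos (last p) \<and> path_image (walk_curve p) = walk_image p"
  using assms
proof (induction p rule: walk_curve.induct)
  case (1 u v rest)
  have uv: "adj E u v" using 1 by simp
  note first = edge_curve[OF uv]
  show ?case
  proof (cases "rest = []")
    case True
    then show ?thesis using first unfolding walk_image_def by simp
  next
    case False
    then have "length (v # rest) \<ge> 2" by (cases rest) auto
    then have IH: "arc (walk_curve (v # rest)) \<and> pathstart (walk_curve (v # rest)) = pos v \<and>
        pathfinish (walk_curve (v # rest)) = pos (last (v # rest)) \<and>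
        path_image (walk_curve (v # rest)) = walk_image (v # rest)"
      using 1 False by simp
    have "{u, v} \<notin> walk_edges (v # rest)"
      using 1(3) walk_edges_subset_set by fastforce
    then have "walk_image [u, v] \<inter> walk_image (v # rest) \<subseteq> pos ` (set [u, v] \<inter> set (v # rest))"
      using uv 1(2) by (intro walk_image_Int) auto
    moreover have "walk_image [u, v] = path_image (edge_curve u v)"
      using first(4) unfolding walk_image_def by simp
    moreover have "set [u, v] \<inter> set (v # rest) = {v}" using 1(3) by auto
    ultimately have "path_image (edge_curve u v) \<inter> walk_image (v # rest) \<subseteq> {pos v}"
      by (metis image_empty image_insert image_mono subset_trans)
    then have "arc (edge_curve u v +++ walk_curve (v # rest))"
      using first IH by (intro arc_join) auto
    moreover have "path_image (edge_curve u v +++ walk_curve (v # rest)) = walk_image (u # v # rest)"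
      using first IH by (simp add: path_image_join walk_image_def)
    ultimately show ?thesis using first IH False by simp
  qed
qed auto

lemma walk_image_Int_vertices:
  assumes "walk E p" "length p \<ge> 2"
  shows "walk_image p \<inter> pos ` V = pos ` set p"
proof -
  have "walk_image p \<inter> pos ` V = (\<Union>e\<in>walk_edges p. path_image (\<gamma> e) \<inter> pos ` V)"
    unfolding walk_image_def by blast
  also have "\<dots> = (\<Union>e\<in>walk_edges p. pos ` e)"
  proof (rule SUP_cong[OF refl])
    fix e assume "e \<in> walk_edges p"
    then show "path_image (\<gamma> e) \<inter> pos ` V = pos ` e"
      using edge_arc walk_edges_subset[OF assms(1)] by blast
  qed
  also have "\<dots> = pos ` set p" using Union_walk_edges[OF assms(2)] by blast
  finally show ?thesis .
qed

lemma pos_in_walk_image_iff: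
  assumes "walk E p" "length p \<ge> 2" "v \<in> V"
  shows "pos v \<in> walk_image p \<longleftrightarrow> v \<in> set p"
  using walk_image_Int_vertices[OF assms(1,2)] inj_on_image_mem_iff[OF inj_pos assms(3)]
    set_walk_subset[OF assms(1,2)] assms(3) by blast

lemma edge_image_Int_walk_image:
  assumes "walk E p" "e \<in> E" "e \<inter> set p = {}"
  shows "path_image (\<gamma> e) \<inter> walk_image p = {}"
proof -
  have "path_image (\<gamma> e) \<inter> path_image (\<gamma> e') = {}" if e': "e' \<in> walk_edges p" for e'
  proof -
    have "e' \<subseteq> set p" using e' by (rule walk_edges_subset_set)
    moreover have "e \<noteq> {}" using card_edge[OF assms(2)] by auto
    ultimately have "e \<noteq> e'" "e \<inter> e' = {}" using assms(3) by blast+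
    then show ?thesis using edge_crossing[OF assms(2)] walk_edges_subset[OF assms(1)] e' by blast
  qed
  then show ?thesis unfolding walk_image_def by blast
qed

definition vertices_inside :: "complex set \<Rightarrow> 'a set" where
  "vertices_inside K = {v \<in> V. pos v \<in> inside K}"

lemma finite_vertices_inside: "finite (vertices_inside K)"
  unfolding vertices_inside_def using finite_V by simp

text \<open>The edges of the matching cannot cross K, so they pair up the vertices inside K.\<close>
lemma even_card_vertices_inside:
  assumes M: "perfect_matching (V - S) (del_verts_E E S) M"
    and S: "\<And>v. v \<in> V \<Longrightarrow> v \<in> S \<Longrightarrow> pos v \<in> K"
    and avoid: "\<And>e. e \<in> E \<Longrightarrow> e \<inter> S = {} \<Longrightarrow> path_image (\<gamma> e) \<inter> K = {}"
  shows "even (card (vertices_inside K))"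
  unfolding vertices_inside_def
proof (rule even_card_matching_closed[OF M])
  show "card e = 2" if "e \<in> del_verts_E E S" for e
    using that card_edge unfolding del_verts_E_def by blast
  show "finite {v \<in> V. pos v \<in> inside K}" using finite_V by simp
  show "{v \<in> V. pos v \<in> inside K} \<subseteq> V - S"
    using S inside_no_overlap[of K] by blast
next
  fix e v assume e: "e \<in> M" "v \<in> e" "v \<in> {v \<in> V. pos v \<in> inside K}"
  then have E: "e \<in> E" "e \<inter> S = {}"
    using M unfolding perfect_matching_def del_verts_E_def by auto
  have "pos ` e \<subseteq> path_image (\<gamma> e)"
    using edge_arc[OF E(1)] pathstart_in_path_image pathfinish_in_path_image by blast
  moreover have "connected (path_image (\<gamma> e))"
    using edge_arc[OF E(1)] by (simp add: arc_imp_path connected_path_image)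
  ultimately have "connected_component (- K) (pos v) (pos w)" if "w \<in> e" for w
    using avoid[OF E] e(2) that unfolding connected_component_def by blast
  then have "pos w \<in> inside K" if "w \<in> e" for w
    using that e(3) inside_same_component by blast
  then show "e \<subseteq> {v \<in> V. pos v \<in> inside K}"
    using edge_subset_V[OF E(1)] by blast
qed

end

section \<open>Odd theta subgraphs\<close>

text \<open>The length of a path is its number of vertices, so the three x-y paths Q 0, Q 1, Q 2
  have an even number of edges each.\<close>
locale extendable_odd_theta = plane_graph +
  fixes x y :: 'a and Q :: "nat \<Rightarrow> 'a list"
  assumes ends_distinct: "x \<noteq> y"
    and Q_path: "j < 3 \<Longrightarrow> is_path E x (Q j) y"
    and Q_odd: "j < 3 \<Longrightarrow> odd (length (Q j))"
    and Q_meet: "j < 3 \<Longrightarrow> k < 3 \<Longrightarrow> j \<noteq> k \<Longrightarrow> set (Q j) \<inter> set (Q k) = {x, y}"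
    and cycle_complement_matchable: "is_cycle E vs \<Longrightarrow> even (length vs) \<Longrightarrow>
          has_perfect_matching (V - set vs) (del_verts_E E (set vs))"
begin

lemma Q_walk: "j < 3 \<Longrightarrow> walk E (Q j)"
  using Q_path unfolding is_path_iff_walk by blast

lemma Q_length: "j < 3 \<Longrightarrow> length (Q j) \<ge> 3"
  using is_path_length_ge2[OF Q_path ends_distinct] Q_odd by (metis le_antisym not_less_eq_eq
      numeral_2_eq_2 numeral_3_eq_3 odd_numeral even_numeral)

lemma set_Q_subset: "j < 3 \<Longrightarrow> set (Q j) \<subseteq> V"
  using set_walk_subset[OF Q_walk] Q_length by fastforce

lemma pos_ends_distinct: "pos x \<noteq> pos y"
proof -
  have "x \<in> V" "y \<in> V"
    using set_Q_subset[of 0] Q_path[of 0] unfolding is_path_iff_walk by auto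
  then show ?thesis using inj_on_contraD[OF inj_pos ends_distinct] by simp
qed

lemma walk_edges_Q_disjoint:
  assumes "j < 3" "k < 3" "j \<noteq> k"
  shows "walk_edges (Q j) \<inter> walk_edges (Q k) = {}"
proof (rule ccontr)
  assume "walk_edges (Q j) \<inter> walk_edges (Q k) \<noteq> {}"
  then obtain e where e: "e \<in> walk_edges (Q j)" "e \<in> walk_edges (Q k)" by blast
  have "e \<subseteq> {x, y}"
    using walk_edges_subset_set[OF e(1)] walk_edges_subset_set[OF e(2)] Q_meet[OF assms] by blast
  moreover have "card e = 2" using card_edge walk_edges_subset[OF Q_walk[OF assms(1)]] e(1) by blast
  ultimately have "e = {x, y}" using ends_distinct by (intro card_subset_eq) auto
  moreover have "distinct (Q j)" "hd (Q j) = x" "last (Q j) = y"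
    using Q_path[OF assms(1)] unfolding is_path_iff_walk by simp_all
  ultimately have "length (Q j) = 2"
    using walk_edge_hd_last[OF _ e(1)] Q_length[OF assms(1)] by simp
  then show False using Q_length[OF assms(1)] by simp
qed

lemma Q_curve:
  assumes "j < 3"
  shows "arc (walk_curve (Q j)) \<and> pathstart (walk_curve (Q j)) = pos x \<and>
    pathfinish (walk_curve (Q j)) = pos y \<and> path_image (walk_curve (Q j)) = walk_image (Q j)"
  using walk_curve[of "Q j"] Q_path[OF assms] Q_length[OF assms] unfolding is_path_iff_walk by auto

lemma walk_image_Q_Int:
  assumes "j < 3" "k < 3" "j \<noteq> k"
  shows "walk_image (Q j) \<inter> walk_image (Q k) = {pos x, pos y}"
proof
  show "walk_image (Q j) \<inter> walk_image (Q k) \<subseteq> {pos x, pos y}"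
    using walk_image_Int[OF Q_walk Q_walk walk_edges_Q_disjoint[OF assms]] Q_meet[OF assms] assms
    by simp
  show "{pos x, pos y} \<subseteq> walk_image (Q j) \<inter> walk_image (Q k)"
    using Q_curve[OF assms(1)] Q_curve[OF assms(2)]
    by (metis Int_iff empty_subsetI insert_subset pathfinish_in_path_image pathstart_in_path_image)
qed

lemma even_card_inside_cycle:
  assumes "j < 3" "k < 3" "j \<noteq> k"
  shows "even (card (vertices_inside (walk_image (Q j) \<union> walk_image (Q k))))"
proof -
  define C where "C = Q j @ butlast (tl (rev (Q k)))"
  note C = is_cycle_join_paths[OF Q_path[OF assms(1)] Q_path[OF assms(2)] Q_meet[OF assms]
      ends_distinct Q_length[OF assms(1)], folded C_def]
  have "even (length C)" unfolding C(3)
    using Q_odd[OF assms(1)] Q_odd[OF assms(2)] Q_length[OF assms(2)] by presburger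
  then obtain M where M: "perfect_matching (V - set C) (del_verts_E E (set C)) M"
    using cycle_complement_matchable[OF C(1)] unfolding has_perfect_matching_def by blast
  have "length (Q j) \<ge> 2" "length (Q k) \<ge> 2" using Q_length assms by (simp_all add: Suc_leD)
  show ?thesis
  proof (rule even_card_vertices_inside[OF M])
    fix v assume "v \<in> V" "v \<in> set C"
    then show "pos v \<in> walk_image (Q j) \<union> walk_image (Q k)"
      using pos_in_walk_image_iff[OF Q_walk[OF assms(1)] \<open>length (Q j) \<ge> 2\<close>]
        pos_in_walk_image_iff[OF Q_walk[OF assms(2)] \<open>length (Q k) \<ge> 2\<close>]
      unfolding C(2) by blast
  next
    fix e assume "e \<in> E" "e \<inter> set C = {}"
    then show "path_image (\<gamma> e) \<inter> (walk_image (Q j) \<union> walk_image (Q k)) = {}"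
      using edge_image_Int_walk_image[OF Q_walk[OF assms(1)]]
        edge_image_Int_walk_image[OF Q_walk[OF assms(2)]]
      unfolding C(2) by blast
  qed
qed

lemma vertices_on_Q_interior:
  assumes "j < 3"
  shows "{v \<in> V. pos v \<in> walk_image (Q j) - {pos x, pos y}} = set (Q j) - {x, y}"
proof -
  have "x \<in> V" "y \<in> V" "length (Q j) \<ge> 2"
    using set_Q_subset[OF assms] Q_path[OF assms] Q_length[OF assms]
    unfolding is_path_iff_walk by auto
  then show ?thesis
    using pos_in_walk_image_iff[OF Q_walk[OF assms]] set_Q_subset[OF assms]
      inj_on_eq_iff[OF inj_pos] by auto
qed

lemma card_vertices_inside_split:
  assumes jkl: "j < 3" "k < 3" "l < 3" "j \<noteq> k" "j \<noteq> l" "k \<noteq> l"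
    and "walk_image (Q l) \<inter> inside (walk_image (Q j) \<union> walk_image (Q k)) \<noteq> {}"
  shows "card (vertices_inside (walk_image (Q j) \<union> walk_image (Q k))) =
    card (vertices_inside (walk_image (Q j) \<union> walk_image (Q l))) +
    card (vertices_inside (walk_image (Q k) \<union> walk_image (Q l))) + (length (Q l) - 2)"
proof -
  obtain disj: "inside (walk_image (Q j) \<union> walk_image (Q l)) \<inter>
        inside (walk_image (Q k) \<union> walk_image (Q l)) = {}"
    and split: "inside (walk_image (Q j) \<union> walk_image (Q l)) \<union>
        inside (walk_image (Q k) \<union> walk_image (Q l)) \<union> (walk_image (Q l) - {pos x, pos y}) =
        inside (walk_image (Q j) \<union> walk_image (Q k))"
    using split_inside_simple_closed_curve[of "walk_curve (Q j)" "pos x" "pos y"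
        "walk_curve (Q k)" "walk_curve (Q l)"]
      Q_curve[OF jkl(1)] Q_curve[OF jkl(2)] Q_curve[OF jkl(3)] arc_imp_simple_path
      pos_ends_distinct walk_image_Q_Int jkl assms(7)
    by (metis (no_types, lifting))
  have "vertices_inside (walk_image (Q j) \<union> walk_image (Q k)) =
      vertices_inside (walk_image (Q j) \<union> walk_image (Q l)) \<union>
      vertices_inside (walk_image (Q k) \<union> walk_image (Q l)) \<union> (set (Q l) - {x, y})"
    unfolding vertices_inside_def vertices_on_Q_interior[OF jkl(3), symmetric] split[symmetric]
    by blast
  moreover have "vertices_inside (walk_image (Q j) \<union> walk_image (Q l)) \<inter>
      vertices_inside (walk_image (Q k) \<union> walk_image (Q l)) = {}"
    using disj unfolding vertices_inside_def by blast
  moreover have "(vertices_inside (walk_image (Q j) \<union> walk_image (Q l)) \<union>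
      vertices_inside (walk_image (Q k) \<union> walk_image (Q l))) \<inter> (set (Q l) - {x, y}) = {}"
    using inside_no_overlap vertices_on_Q_interior[OF jkl(3)] unfolding vertices_inside_def
    by blast
  moreover have "card (set (Q l) - {x, y}) = length (Q l) - 2"
    using Q_path[OF jkl(3)] ends_distinct distinct_card[of "Q l"]
    unfolding is_path_iff_walk by (auto simp: card_Diff_subset)
  ultimately show ?thesis by (simp add: card_Un_disjoint finite_vertices_inside)
qed

lemma Q_outside_cycle:
  assumes jkl: "j < 3" "k < 3" "l < 3" "j \<noteq> k" "j \<noteq> l" "k \<noteq> l"
  shows "walk_image (Q l) \<inter> inside (walk_image (Q j) \<union> walk_image (Q k)) = {}"
proof (rule ccontr)
  assume "walk_image (Q l) \<inter> inside (walk_image (Q j) \<union> walk_image (Q k)) \<noteq> {}"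
  note split = card_vertices_inside_split[OF jkl this]
  have "even (card (vertices_inside (walk_image (Q j) \<union> walk_image (Q k))))"
    "even (card (vertices_inside (walk_image (Q j) \<union> walk_image (Q l))))"
    "even (card (vertices_inside (walk_image (Q k) \<union> walk_image (Q l))))"
    using even_card_inside_cycle jkl by simp_all
  then have "even (length (Q l) - 2)" unfolding split by presburger
  then show False using Q_odd[OF jkl(3)] Q_length[OF jkl(3)] by presburger
qed

lemma inconsistent: False
  using theta_arc_meets_inside[of "walk_curve (Q 0)" "walk_curve (Q 1)" "walk_curve (Q 2)"
      "pos x" "pos y"]
    Q_curve[of 0] Q_curve[of 1] Q_curve[of 2]
    walk_image_Q_Int[of 0 1] walk_image_Q_Int[of 0 2] walk_image_Q_Int[of 1 2]
    Q_outside_cycle[of 0 1 2] Q_outside_cycle[of 1 2 0] Q_outside_cycle[of 0 2 1]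
  by simp

end

text \<open>The Jordan curve theorem (Jordan_inside_outside) is stated for curves in the complex
  plane, so drawings in real^2 are transported there.\<close>
definition vec2_complex :: "real^2 \<Rightarrow> complex" where
  "vec2_complex v = Complex (v$1) (v$2)"

lemma linear_vec2_complex: "linear vec2_complex"
  by (rule linearI) (simp_all add: vec2_complex_def complex_eq_iff)

lemma inj_vec2_complex: "inj vec2_complex"
  by (rule injI) (simp add: vec2_complex_def vec_eq_iff forall_2)

lemma planar_imp_plane_graph:
  assumes "graph V E" "planar V E"
  obtains pos \<gamma> where "plane_graph V E pos \<gamma>"
proof -
  obtain pos :: "'a \<Rightarrow> real^2" and \<gamma> :: "'a set \<Rightarrow> real \<Rightarrow> real^2" where
    inj: "inj_on pos V" and
    arcs: "\<forall>e\<in>E. arc (\<gamma> e) \<and> {pathstart (\<gamma> e), pathfinish (\<gamma> e)} = pos ` e \<and>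
             path_image (\<gamma> e) \<inter> pos ` V = pos ` e" and
    crossing: "\<forall>e\<in>E. \<forall>e'\<in>E. e \<noteq> e' \<longrightarrow> path_image (\<gamma> e) \<inter> path_image (\<gamma> e') \<subseteq> pos ` (e \<inter> e')"
    using assms(2) unfolding planar_def by blast
  let ?f = vec2_complex
  have image_Int: "?f ` X \<inter> ?f ` Y = ?f ` (X \<inter> Y)" for X Y
    using inj_vec2_complex by (simp add: image_Int)
  have "plane_graph V E (?f \<circ> pos) (\<lambda>e. ?f \<circ> \<gamma> e)"
  proof
    show "graph V E" by fact
    show "inj_on (?f \<circ> pos) V"
      using inj inj_vec2_complex by (simp add: comp_inj_on inj_on_subset)
  next
    fix e assume e: "e \<in> E"
    have "arc (?f \<circ> \<gamma> e)"
      using arcs e arc_linear_image_eq[OF linear_vec2_complex inj_vec2_complex] by simp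
    moreover have "{pathstart (?f \<circ> \<gamma> e), pathfinish (?f \<circ> \<gamma> e)} =
        ?f ` {pathstart (\<gamma> e), pathfinish (\<gamma> e)}"
      by (simp add: pathstart_compose pathfinish_compose)
    then have "{pathstart (?f \<circ> \<gamma> e), pathfinish (?f \<circ> \<gamma> e)} = (?f \<circ> pos) ` e"
      using arcs e by (simp add: image_comp)
    moreover have "path_image (?f \<circ> \<gamma> e) \<inter> (?f \<circ> pos) ` V =
        ?f ` (path_image (\<gamma> e) \<inter> pos ` V)"
      by (simp only: path_image_compose image_comp[symmetric] image_Int)
    then have "path_image (?f \<circ> \<gamma> e) \<inter> (?f \<circ> pos) ` V = (?f \<circ> pos) ` e"
      using arcs e by (simp add: image_comp)
    ultimately show "arc (?f \<circ> \<gamma> e) \<and> {pathstart (?f \<circ> \<gamma> e), pathfinish (?f \<circ> \<gamma> e)} =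
        (?f \<circ> pos) ` e \<and> path_image (?f \<circ> \<gamma> e) \<inter> (?f \<circ> pos) ` V = (?f \<circ> pos) ` e"
      by blast
  next
    fix e e' assume "e \<in> E" "e' \<in> E" "e \<noteq> e'"
    then have "path_image (\<gamma> e) \<inter> path_image (\<gamma> e') \<subseteq> pos ` (e \<inter> e')"
      using crossing by blast
    then show "path_image (?f \<circ> \<gamma> e) \<inter> path_image (?f \<circ> \<gamma> e') \<subseteq> (?f \<circ> pos) ` (e \<inter> e')"
      by (simp only: path_image_compose image_comp[symmetric] image_Int) (rule image_mono)
  qed
  then show ?thesis by (rule that)
qed

theorem lemma3p1:
  fixes V :: "'a set" and E :: "'a set set"
  assumes "planar V E"
    and "matching_covered V E"
    and "cycle_extendable V E"
  shows "K23_free E"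
  unfolding K23_free_def
proof
  assume "has_K23_bisubdivision E"
  then obtain x y :: 'a and Q :: "nat \<Rightarrow> 'a list" where theta: "x \<noteq> y"
    "\<And>j. j < 3 \<Longrightarrow> is_path E x (Q j) y \<and> odd (length (Q j))"
    "\<And>j k. j < 3 \<Longrightarrow> k < 3 \<Longrightarrow> j \<noteq> k \<Longrightarrow> set (Q j) \<inter> set (Q k) = {x, y}"
    by (elim K23_bisubdivision_odd_theta) blast
  have "graph V E" using assms(2) unfolding matching_covered_def by simp
  then obtain pos \<gamma> where "plane_graph V E pos \<gamma>"
    using assms(1) by (rule planar_imp_plane_graph)
  then have "extendable_odd_theta V E pos \<gamma> x y Q"
    using theta assms(3) unfolding extendable_odd_theta_def extendable_odd_theta_axioms_def
      cycle_extendable_def by blast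
  then show False by (rule extendable_odd_theta.inconsistent)
qed

end
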